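(* Let $(X,d)$ be a compact metric space containing infinitely many points, and let $C(X)$ be the space of continuous functions $f:X\to\mathbb{R}$ with the norm $\|f\|_\infty=\sup_{x\in X}|f(x)|$. For $f\in C(X)$ let $\omega(f,\delta)=\sup_{d(x,y)\le\delta}|f(x)-f(y)|$ and $\Omega(f)=\{\omega(f,\frac{1}{1+n})\}_{n=0}^\infty$. Then $\Omega$ satisfies Shapiro's theorem on $C(X)$: for every non-increasing sequence $\{\varepsilon_n\}$ of nonnegative reals with $\varepsilon_n\to0$ there exists $f\in C(X)$ with $\Omega(f)\in c_0$ and $\omega(f,\frac{1}{1+n})\neq\mathbf{O}(\varepsilon_n)$. *)

theory Defs
  imports "HOL-Analysis.Analysis" "HOL-Library.Landau_Symbols"
begin

definition modulus_of_continuity :: "'a::metric_space set \<Rightarrow> ('a \<Rightarrow> real) \<Rightarrow> real \<Rightarrow> real" where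
  "modulus_of_continuity S f \<delta> =
     Sup {\<bar>f x - f y\<bar> | x y. x \<in> S \<and> y \<in> S \<and> dist x y \<le> \<delta>}"

end

theory Submission
  imports Defs
begin

text \<open>A compact infinite space has an accumulation point \<open>p\<close>. Given \<open>\<epsilon>\<close>, pick \<open>\<eta>\<close> decreasing
  to \<open>0\<close> with \<open>\<eta> n > \<surd>\<epsilon> n\<close> and superpose ramps in \<open>dist x p\<close>: the \<open>j\<close>-th ramp climbs from \<open>0\<close>
  at \<open>p\<close> to height \<open>\<eta> j - \<eta> (j + 1)\<close> at distance \<open>1 / (j + 2)\<close>. The sum \<open>f\<close> is continuous, vanishes
  at \<open>p\<close> and is at least \<open>\<eta> n\<close> at distance \<open>1 / (n + 2)\<close> from \<open>p\<close>. Since \<open>p\<close> is an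
  accumulation point, infinitely often some point of distance between \<open>1 / (n + 2)\<close> and
  \<open>1 / (n + 1)\<close> from \<open>p\<close> exists, so \<open>\<omega>(f, 1 / (n + 1)) \<ge> \<eta> n > \<surd>\<epsilon> n\<close> infinitely often,
  which rules out \<open>\<omega>(f, 1 / (n + 1)) = O(\<epsilon> n)\<close>.\<close>

lemma abs_diff_le_modulus_of_continuity:
  assumes bound: "\<And>x y. x \<in> S \<Longrightarrow> y \<in> S \<Longrightarrow> dist x y \<le> \<delta> \<Longrightarrow> \<bar>f x - f y\<bar> \<le> B"
    and "x \<in> S" "y \<in> S" "dist x y \<le> \<delta>"
  shows "\<bar>f x - f y\<bar> \<le> modulus_of_continuity S f \<delta>"
  unfolding modulus_of_continuity_def
proof (rule cSup_upper)
  show "\<bar>f x - f y\<bar> \<in> {\<bar>f x - f y\<bar> |x y. x \<in> S \<and> y \<in> S \<and> dist x y \<le> \<delta>}"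
    using assms(2-4) by blast
  show "bdd_above {\<bar>f x - f y\<bar> |x y. x \<in> S \<and> y \<in> S \<and> dist x y \<le> \<delta>}"
    using bound by (intro bdd_aboveI[of _ B]) blast
qed

lemma modulus_of_continuity_nonneg:
  assumes "\<And>x y. x \<in> S \<Longrightarrow> y \<in> S \<Longrightarrow> dist x y \<le> \<delta> \<Longrightarrow> \<bar>f x - f y\<bar> \<le> B"
    and "S \<noteq> {}" "0 \<le> \<delta>"
  shows "0 \<le> modulus_of_continuity S f \<delta>"
proof -
  obtain x where "x \<in> S" using assms(2) by blast
  then show ?thesis
    using abs_diff_le_modulus_of_continuity[of S \<delta> f B x x] assms(1,3) by simp
qed

lemma modulus_of_continuity_le:
  assumes "\<And>x y. x \<in> S \<Longrightarrow> y \<in> S \<Longrightarrow> dist x y \<le> \<delta> \<Longrightarrow> \<bar>f x - f y\<bar> \<le> e"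
    and "S \<noteq> {}" "0 \<le> \<delta>"
  shows "modulus_of_continuity S f \<delta> \<le> e"
  unfolding modulus_of_continuity_def
proof (rule cSup_least)
  obtain x where "x \<in> S" using assms(2) by blast
  then show "{\<bar>f x - f y\<bar> |x y. x \<in> S \<and> y \<in> S \<and> dist x y \<le> \<delta>} \<noteq> {}"
    using assms(3) by force
qed (use assms(1) in blast)

lemma tendsto_modulus_of_continuity_at_right_0:
  assumes "uniformly_continuous_on S f" "S \<noteq> {}"
  shows "(modulus_of_continuity S f \<longlongrightarrow> 0) (at_right 0)"
proof (rule tendstoI)
  fix e :: real assume "0 < e"
  then obtain d where "0 < d" and d: "\<And>x y. x \<in> S \<Longrightarrow> y \<in> S \<Longrightarrow> dist y x < d \<Longrightarrow> \<bar>f y - f x\<bar> < e / 2"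
    using assms(1) unfolding uniformly_continuous_on_def dist_real_def by (metis half_gt_zero)
  have "dist (modulus_of_continuity S f \<delta>) 0 < e" if "0 < \<delta>" "\<delta> < d" for \<delta>
  proof -
    have bound: "\<bar>f x - f y\<bar> \<le> e / 2" if "x \<in> S" "y \<in> S" "dist x y \<le> \<delta>" for x y
      using d[of y x] that \<open>\<delta> < d\<close> by simp
    have "0 \<le> modulus_of_continuity S f \<delta>" "modulus_of_continuity S f \<delta> \<le> e / 2"
      using modulus_of_continuity_nonneg[of S \<delta> f "e / 2"] modulus_of_continuity_le[of S \<delta> f "e / 2"]
        bound assms(2) \<open>0 < \<delta>\<close> by auto
    then show ?thesis using \<open>0 < e\<close> by (simp add: dist_real_def)
  qed
  then show "\<forall>\<^sub>F \<delta> in at_right 0. dist (modulus_of_continuity S f \<delta>) 0 < e"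
    using \<open>0 < d\<close> by (auto simp: eventually_at_right_field)
qed

lemma tendsto_modulus_of_continuity_0:
  assumes "uniformly_continuous_on S f" "S \<noteq> {}" "(\<delta> \<longlongrightarrow> 0) F" "\<forall>\<^sub>F x in F. 0 < \<delta> x"
  shows "((\<lambda>x. modulus_of_continuity S f (\<delta> x)) \<longlongrightarrow> 0) F"
  using tendsto_modulus_of_continuity_at_right_0[OF assms(1,2)] tendsto_imp_filterlim_at_right[OF assms(3,4)]
  by (rule filterlim_compose)

lemma exists_decseq_gt_sqrt:
  fixes \<epsilon> :: "nat \<Rightarrow> real"
  assumes "decseq \<epsilon>" "\<epsilon> \<longlonglongrightarrow> 0"
  shows "\<exists>\<eta>. decseq \<eta> \<and> \<eta> \<longlonglongrightarrow> 0 \<and> (\<forall>n. sqrt (\<epsilon> n) < \<eta> n)"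
proof (intro exI conjI allI)
  let ?\<eta> = "\<lambda>n. sqrt (\<epsilon> n) + 1 / (1 + real n)"
  show "decseq ?\<eta>"
    using assms(1) unfolding decseq_def
    by (intro allI impI add_mono real_sqrt_le_mono) (auto simp: divide_simps)
  have "(\<lambda>n. 1 / (1 + real n)) \<longlonglongrightarrow> 0"
    using LIMSEQ_inverse_real_of_nat by (simp add: inverse_eq_divide)
  then show "?\<eta> \<longlonglongrightarrow> 0"
    using tendsto_add[OF tendsto_real_sqrt[OF assms(2)]] by fastforce
  show "sqrt (\<epsilon> n) < ?\<eta> n" for n
    by simp
qed

lemma islimpt_frequently_annulus:
  assumes "p islimpt S"
  shows "\<exists>\<^sub>F n in sequentially. \<exists>x\<in>S. 1 / (real n + 2) \<le> dist x p \<and> dist x p \<le> 1 / (1 + real n)"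
  unfolding frequently_sequentially
proof
  fix N
  have "0 < 1 / (real N + 2)" by simp
  then obtain x where "x \<in> S" "x \<noteq> p" and close: "dist x p < 1 / (real N + 2)"
    using assms unfolding islimpt_approachable by blast
  define r where "r = dist x p"
  have "0 < r" using \<open>x \<noteq> p\<close> by (simp add: r_def)
  define n where "n = nat (\<lfloor>1 / r\<rfloor> - 1)"
  have "real N + 2 < 1 / r"
    using close \<open>0 < r\<close> by (simp add: r_def field_simps)
  then have "N + 2 \<le> \<lfloor>1 / r\<rfloor>"
    by (simp add: le_floor_iff)
  then have n: "real n + 1 = of_int \<lfloor>1 / r\<rfloor>" and "N \<le> n"
    by (auto simp: n_def of_nat_nat)
  have "real n + 1 \<le> 1 / r" "1 / r < real n + 2"
    using n by linarith+
  then have "1 / (real n + 2) \<le> r \<and> r \<le> 1 / (1 + real n)"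
    using \<open>0 < r\<close> by (simp add: field_simps)
  then show "\<exists>n\<ge>N. \<exists>x\<in>S. 1 / (real n + 2) \<le> dist x p \<and> dist x p \<le> 1 / (1 + real n)"
    using \<open>N \<le> n\<close> \<open>x \<in> S\<close> unfolding r_def by blast
qed

definition ramp_sum :: "(nat \<Rightarrow> real) \<Rightarrow> 'a::metric_space \<Rightarrow> 'a \<Rightarrow> real" where
  "ramp_sum \<eta> p x = (\<Sum>j. (\<eta> j - \<eta> (Suc j)) * min 1 ((real j + 2) * dist x p))"

context
  fixes \<eta> :: "nat \<Rightarrow> real"
  assumes decseq: "decseq \<eta>" and lim: "\<eta> \<longlonglongrightarrow> 0"
begin

private lemma ramp_weight_nonneg: "0 \<le> \<eta> j - \<eta> (Suc j)"
  using decseq by (simp add: decseq_Suc_iff)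

private lemma ramp_weights_sums: "(\<lambda>j. \<eta> (j + m) - \<eta> (Suc (j + m))) sums \<eta> m"
  using telescope_sums'[OF LIMSEQ_ignore_initial_segment[OF lim, of m]] by simp

private lemma summable_ramp_weights: "summable (\<lambda>j. \<eta> j - \<eta> (Suc j))"
  using sums_summable[OF ramp_weights_sums[of 0]] by simp

private lemma ramp_nonneg: "0 \<le> (\<eta> j - \<eta> (Suc j)) * min 1 ((real j + 2) * dist x p)"
  using ramp_weight_nonneg by simp

private lemma norm_ramp_le:
  "norm ((\<eta> j - \<eta> (Suc j)) * min 1 ((real j + 2) * dist x p)) \<le> \<eta> j - \<eta> (Suc j)"
  using ramp_weight_nonneg by (simp add: mult_left_le)

private lemma ramp_le: "(\<eta> j - \<eta> (Suc j)) * min 1 ((real j + 2) * dist x p) \<le> \<eta> j - \<eta> (Suc j)"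
  using norm_ramp_le[of j x p] by simp

private lemma summable_ramps: "summable (\<lambda>j. (\<eta> j - \<eta> (Suc j)) * min 1 ((real j + 2) * dist x p))"
  by (rule summable_comparison_test'[OF summable_ramp_weights norm_ramp_le])

lemma ramp_sum_nonneg: "0 \<le> ramp_sum \<eta> p x"
  unfolding ramp_sum_def by (intro suminf_nonneg summable_ramps ramp_nonneg)

lemma ramp_sum_le: "ramp_sum \<eta> p x \<le> \<eta> 0"
proof -
  have "ramp_sum \<eta> p x \<le> (\<Sum>j. \<eta> j - \<eta> (Suc j))"
    unfolding ramp_sum_def
    by (intro suminf_le ramp_le summable_ramp_weights summable_ramps)
  also have "\<dots> = \<eta> 0"
    using sums_unique[OF ramp_weights_sums[of 0]] by simp
  finally show ?thesis .
qed

lemma ramp_sum_center: "ramp_sum \<eta> p p = 0"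
  by (simp add: ramp_sum_def)

lemma continuous_on_ramp_sum: "continuous_on S (ramp_sum \<eta> p)"
proof (rule uniform_limit_theorem)
  show "uniform_limit S (\<lambda>n x. \<Sum>j<n. (\<eta> j - \<eta> (Suc j)) * min 1 ((real j + 2) * dist x p))
      (ramp_sum \<eta> p) sequentially"
    unfolding ramp_sum_def by (rule Weierstrass_m_test[OF norm_ramp_le summable_ramp_weights])
  show "\<forall>\<^sub>F n in sequentially.
      continuous_on S (\<lambda>x. \<Sum>j<n. (\<eta> j - \<eta> (Suc j)) * min 1 ((real j + 2) * dist x p))"
    by (intro always_eventually allI continuous_intros)
qed simp

text \<open>Outside the ball of radius \<open>1 / (n + 2)\<close> all ramps from the \<open>n\<close>-th on are saturated,
  and their weights telescope to \<open>\<eta> n\<close>.\<close>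
lemma ramp_sum_ge:
  assumes "1 / (real n + 2) \<le> dist x p"
  shows "\<eta> n \<le> ramp_sum \<eta> p x"
proof -
  have "1 \<le> (real n + 2) * dist x p"
    using assms by (simp add: field_simps)
  then have saturated: "min 1 ((real j + real n + 2) * dist x p) = 1" for j
    using mult_right_mono[of "real n + 2" "real j + real n + 2" "dist x p"] by simp
  have "ramp_sum \<eta> p x =
      (\<Sum>j. (\<eta> (j + n) - \<eta> (Suc (j + n))) * min 1 ((real (j + n) + 2) * dist x p))
      + (\<Sum>j<n. (\<eta> j - \<eta> (Suc j)) * min 1 ((real j + 2) * dist x p))"
    unfolding ramp_sum_def by (rule suminf_split_initial_segment[OF summable_ramps])
  also have "(\<Sum>j. (\<eta> (j + n) - \<eta> (Suc (j + n))) * min 1 ((real (j + n) + 2) * dist x p)) = \<eta> n"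
    using sums_unique[OF ramp_weights_sums[of n]] by (simp add: saturated)
  finally show ?thesis
    using sum_nonneg[OF ramp_nonneg] by simp
qed

lemma frequently_le_modulus_of_continuity_ramp_sum:
  assumes "p \<in> S" "p islimpt S"
  shows "\<exists>\<^sub>F n in sequentially. \<eta> n \<le> modulus_of_continuity S (ramp_sum \<eta> p) (1 / (1 + real n))"
  using islimpt_frequently_annulus[OF assms(2)]
proof (rule frequently_elim1)
  fix n assume "\<exists>x\<in>S. 1 / (real n + 2) \<le> dist x p \<and> dist x p \<le> 1 / (1 + real n)"
  then obtain x where "x \<in> S" "1 / (real n + 2) \<le> dist x p" "dist x p \<le> 1 / (1 + real n)"
    by blast
  have bound: "\<bar>ramp_sum \<eta> p y - ramp_sum \<eta> p z\<bar> \<le> \<eta> 0" for y z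
    using ramp_sum_nonneg[of p y] ramp_sum_le[of p y] ramp_sum_nonneg[of p z] ramp_sum_le[of p z]
    by linarith
  have "\<eta> n \<le> \<bar>ramp_sum \<eta> p x - ramp_sum \<eta> p p\<bar>"
    using ramp_sum_ge[OF \<open>1 / (real n + 2) \<le> dist x p\<close>] ramp_sum_center[of p] ramp_sum_nonneg[of p x]
    by simp
  also have "\<dots> \<le> modulus_of_continuity S (ramp_sum \<eta> p) (1 / (1 + real n))"
    by (rule abs_diff_le_modulus_of_continuity[OF bound]) (use \<open>x \<in> S\<close> assms(1) \<open>dist x p \<le> _\<close> in auto)
  finally show "\<eta> n \<le> modulus_of_continuity S (ramp_sum \<eta> p) (1 / (1 + real n))" .
qed

end

text \<open>Any sequence that is frequently above \<open>\<surd>\<epsilon>\<close> escapes \<open>O(\<epsilon>)\<close>,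
  because \<open>c \<epsilon> \<le> \<surd>\<epsilon>\<close> as soon as \<open>\<epsilon> \<le> 1 / c\<^sup>2\<close>.\<close>
lemma not_bigo_if_frequently_gt_sqrt:
  fixes \<epsilon> M :: "nat \<Rightarrow> real"
  assumes "\<epsilon> \<longlonglongrightarrow> 0" "\<And>n. 0 \<le> \<epsilon> n" "\<exists>\<^sub>F n in sequentially. sqrt (\<epsilon> n) < M n"
  shows "M \<notin> O(\<epsilon>)"
proof
  assume "M \<in> O(\<epsilon>)"
  then obtain c where "0 < c" and bigo: "\<forall>\<^sub>F n in sequentially. norm (M n) \<le> c * norm (\<epsilon> n)"
    by (elim landau_o.bigE)
  have "\<forall>\<^sub>F n in sequentially. \<epsilon> n < 1 / c\<^sup>2"
    using order_tendstoD(2)[OF assms(1)] \<open>0 < c\<close> by simp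
  with bigo have "\<forall>\<^sub>F n in sequentially. M n \<le> sqrt (\<epsilon> n)"
  proof eventually_elim
    case (elim n)
    have "sqrt (\<epsilon> n) < 1 / c"
      using real_sqrt_less_mono[OF elim(2)] \<open>0 < c\<close> by (simp add: real_sqrt_divide)
    then have "c * sqrt (\<epsilon> n) \<le> 1"
      using \<open>0 < c\<close> by (simp add: field_simps)
    have "c * \<epsilon> n = c * sqrt (\<epsilon> n) * sqrt (\<epsilon> n)"
      using assms(2)[of n] by (simp add: mult.assoc)
    also have "\<dots> \<le> sqrt (\<epsilon> n)"
      using mult_right_mono[OF \<open>c * sqrt (\<epsilon> n) \<le> 1\<close>, of "sqrt (\<epsilon> n)"] assms(2)[of n] by simp
    finally have "c * \<epsilon> n \<le> sqrt (\<epsilon> n)" .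
    then show ?case
      using elim(1) assms(2)[of n] by simp
  qed
  then have "\<forall>\<^sub>F n in sequentially. \<not> sqrt (\<epsilon> n) < M n"
    by (rule eventually_mono) simp
  with assms(3) show False
    by (simp add: frequently_def)
qed

theorem mainTheorem8:
  fixes S :: "'a::metric_space set"
  assumes "compact S" and "infinite S"
  shows "\<forall>\<epsilon> :: nat \<Rightarrow> real.
           (decseq \<epsilon> \<and> (\<forall>n. \<epsilon> n \<ge> 0) \<and> \<epsilon> \<longlonglongrightarrow> 0) \<longrightarrow>
           (\<exists>f. continuous_on S f \<and>
                (\<lambda>n. modulus_of_continuity S f (1 / (1 + real n))) \<longlonglongrightarrow> 0 \<and>
                (\<lambda>n. modulus_of_continuity S f (1 / (1 + real n))) \<notin> O(\<epsilon>))"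
proof (intro allI impI)
  fix \<epsilon> :: "nat \<Rightarrow> real"
  assume "decseq \<epsilon> \<and> (\<forall>n. \<epsilon> n \<ge> 0) \<and> \<epsilon> \<longlonglongrightarrow> 0"
  then have "decseq \<epsilon>" and nonneg: "\<And>n. 0 \<le> \<epsilon> n" and "\<epsilon> \<longlonglongrightarrow> 0" by auto
  obtain p where "p \<in> S" "p islimpt S"
    using assms compact_eq_Bolzano_Weierstrass by blast
  obtain \<eta> where "decseq \<eta>" "\<eta> \<longlonglongrightarrow> 0" and sqrt_less: "\<And>n. sqrt (\<epsilon> n) < \<eta> n"
    using exists_decseq_gt_sqrt[OF \<open>decseq \<epsilon>\<close> \<open>\<epsilon> \<longlonglongrightarrow> 0\<close>] by blast
  define f where "f = ramp_sum \<eta> p"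
  have "continuous_on S f"
    unfolding f_def by (rule continuous_on_ramp_sum[OF \<open>decseq \<eta>\<close> \<open>\<eta> \<longlonglongrightarrow> 0\<close>])
  moreover have "(\<lambda>n. modulus_of_continuity S f (1 / (1 + real n))) \<longlonglongrightarrow> 0"
    using LIMSEQ_inverse_real_of_nat \<open>compact S\<close> \<open>continuous_on S f\<close> \<open>p \<in> S\<close>
    by (intro tendsto_modulus_of_continuity_0 compact_uniformly_continuous always_eventually)
       (auto simp: inverse_eq_divide)
  moreover have "(\<lambda>n. modulus_of_continuity S f (1 / (1 + real n))) \<notin> O(\<epsilon>)"
  proof (rule not_bigo_if_frequently_gt_sqrt[OF \<open>\<epsilon> \<longlonglongrightarrow> 0\<close> nonneg])
    show "\<exists>\<^sub>F n in sequentially. sqrt (\<epsilon> n) < modulus_of_continuity S f (1 / (1 + real n))"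
      using frequently_le_modulus_of_continuity_ramp_sum[OF \<open>decseq \<eta>\<close> \<open>\<eta> \<longlonglongrightarrow> 0\<close> \<open>p \<in> S\<close> \<open>p islimpt S\<close>]
      unfolding f_def by (rule frequently_elim1) (use sqrt_less less_le_trans in blast)
  qed
  ultimately show "\<exists>f. continuous_on S f \<and>
      (\<lambda>n. modulus_of_continuity S f (1 / (1 + real n))) \<longlonglongrightarrow> 0 \<and>
      (\<lambda>n. modulus_of_continuity S f (1 / (1 + real n))) \<notin> O(\<epsilon>)"
    by blast
qed

end
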